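(* Let $m\ge3$, $\Lambda\in\mathbb{R}$, and let $u:(\mathbb{R}^m\setminus\{0\})\times(-\infty,\Lambda)\to\mathbb{R}$ be a solution of the heat equation $\partial_tu=\Delta u$ with respect to the Euclidean metric. Suppose there exist $C>0$ and $0<\nu<m-2$ with $|\nabla^\ell u(x,t)|\le C|x|^{-\nu-\ell}$ for all $x\neq0$, $t\in(-\infty,\Lambda)$ and $\ell\in\{0,1,2\}$. Then $u\equiv0$. *)

theory Defs
  imports "HOL-Analysis.Analysis"
begin

end

theory Submission
  imports Defs
begin

text \<open>
  A barrier argument. Since \<open>|x|\<^sup>2\<^sup>-\<^sup>m\<close> is harmonic and \<open>\<Delta>|x|\<^sup>2 = 2m\<close>, the function
  \<open>\<epsilon>|x|\<^sup>2\<^sup>-\<^sup>m + \<eta>(R\<^sup>2 - |x|\<^sup>2) + m\<eta>(t\<^sub>0 - t) + \<delta>\<close> is a strict supersolution of the heat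
  equation. Because \<open>\<nu> < m - 2\<close>, the decay \<open>|u| \<le> C|x|\<^sup>-\<^sup>\<nu>\<close> keeps \<open>u\<close> below it on the
  inner sphere \<open>|x| = r\<close> for small \<open>r\<close>, on the outer sphere \<open>|x| = R\<close> for large \<open>R\<close>, and at a
  sufficiently early initial time; by the maximum principle \<open>u\<close> stays below it in the whole
  cylinder. Letting \<open>\<epsilon>, \<eta>, \<delta> \<rightarrow> 0\<close> gives \<open>u \<le> 0\<close>, and the same for \<open>-u\<close>.
\<close>

definition punctured_heat_solution ::
    "real \<Rightarrow> ('a::euclidean_space \<Rightarrow> real \<Rightarrow> real) \<Rightarrow> ('a \<Rightarrow> real \<Rightarrow> 'a)
      \<Rightarrow> ('a \<Rightarrow> real \<Rightarrow> 'a \<Rightarrow> 'a) \<Rightarrow> ('a \<Rightarrow> real \<Rightarrow> real) \<Rightarrow> bool" where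
  "punctured_heat_solution \<Lambda> u Du D2u ut \<longleftrightarrow>
     continuous_on ((UNIV - {0}) \<times> {..<\<Lambda>}) (\<lambda>(x, t). u x t) \<and>
     (\<forall>x t. x \<noteq> 0 \<and> t < \<Lambda> \<longrightarrow>
        ((\<lambda>y. u y t) has_derivative (\<lambda>h. Du x t \<bullet> h)) (at x) \<and>
        ((\<lambda>y. Du y t) has_derivative D2u x t) (at x) \<and>
        ((\<lambda>s. u x s) has_real_derivative ut x t) (at t) \<and>
        ut x t = (\<Sum>i\<in>Basis. D2u x t i \<bullet> i))"

lemma punctured_heat_solution_uminus:
  assumes "punctured_heat_solution \<Lambda> u Du D2u ut"
  shows "punctured_heat_solution \<Lambda> (\<lambda>x t. - u x t) (\<lambda>x t. - Du x t)
           (\<lambda>x t h. - D2u x t h) (\<lambda>x t. - ut x t)"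
  using assms continuous_on_minus[of _ "\<lambda>(x, t). u x t"]
  unfolding punctured_heat_solution_def
  by (auto intro!: derivative_eq_intros simp: case_prod_beta sum_negf)

lemma second_derivative_nonpos_at_local_max:
  fixes g g' :: "real \<Rightarrow> real"
  assumes "d > 0"
    and dg: "\<And>s. \<bar>s\<bar> < d \<Longrightarrow> (g has_real_derivative g' s) (at s)"
    and dg': "(g' has_real_derivative g'') (at 0)"
    and max: "\<And>s. \<bar>s\<bar> < d \<Longrightarrow> g s \<le> g 0"
  shows "g'' \<le> 0"
proof (rule ccontr)
  assume "\<not> g'' \<le> 0"
  then obtain e where "e > 0" and inc: "\<And>h. h > 0 \<Longrightarrow> h < e \<Longrightarrow> g' 0 < g' (0 + h)"
    using DERIV_pos_inc_right[OF dg'] by auto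
  have "g' 0 = 0"
    using DERIV_local_max[OF dg[of 0] \<open>d > 0\<close>] max \<open>d > 0\<close> by auto
  define s where "s = min e d / 2"
  have s: "0 < s" "s < e" "s < d" using \<open>e > 0\<close> \<open>d > 0\<close> by (auto simp: s_def)
  have "\<exists>z. 0 < z \<and> z < s \<and> g s - g 0 = (s - 0) * g' z"
    by (rule MVT2) (use s in \<open>auto intro!: dg\<close>)
  then obtain z where z: "0 < z" "z < s" "g s - g 0 = s * g' z" by auto
  have "g' z > 0" using inc[of z] z s \<open>g' 0 = 0\<close> by auto
  with z s have "g s > g 0" by (smt (verit) mult_pos_pos)
  with max[of s] s show False by simp
qed

lemma hessian_trace_nonpos_at_max:
  fixes v :: "'a::euclidean_space \<Rightarrow> real" and Dv :: "'a \<Rightarrow> 'a"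
  assumes "open S" "x \<in> S"
    and max: "\<And>y. y \<in> S \<Longrightarrow> v y \<le> v x"
    and dv: "\<And>y. y \<in> S \<Longrightarrow> (v has_derivative (\<lambda>h. Dv y \<bullet> h)) (at y)"
    and d2v: "(Dv has_derivative D2v) (at x)"
  shows "(\<Sum>i\<in>Basis. D2v i \<bullet> i) \<le> 0"
proof (rule sum_nonpos)
  fix i :: 'a assume i: "i \<in> Basis"
  obtain d where "d > 0" "ball x d \<subseteq> S" using assms(1,2) open_contains_ball by blast
  have line: "x + s *\<^sub>R i \<in> S" if "\<bar>s\<bar> < d" for s
    using i that \<open>ball x d \<subseteq> S\<close> by (auto simp: dist_norm)
  have dline: "((\<lambda>s. x + s *\<^sub>R i) has_derivative (\<lambda>h. h *\<^sub>R i)) (at s)" for s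
    by (auto intro!: derivative_eq_intros)
  show "D2v i \<bullet> i \<le> 0"
  proof (rule second_derivative_nonpos_at_local_max[OF \<open>d > 0\<close>,
        where g = "\<lambda>s. v (x + s *\<^sub>R i)" and g' = "\<lambda>s. Dv (x + s *\<^sub>R i) \<bullet> i"])
    fix s :: real assume "\<bar>s\<bar> < d"
    show "((\<lambda>s. v (x + s *\<^sub>R i)) has_real_derivative Dv (x + s *\<^sub>R i) \<bullet> i) (at s)"
      using has_derivative_compose[OF dline dv[OF line[OF \<open>\<bar>s\<bar> < d\<close>]]]
      by (simp add: has_field_derivative_def mult_commute_abs)
    show "v (x + s *\<^sub>R i) \<le> v (x + 0 *\<^sub>R i)" using max line[OF \<open>\<bar>s\<bar> < d\<close>] by simp
  next
    have "((\<lambda>s. Dv (x + s *\<^sub>R i) \<bullet> i) has_derivative (\<lambda>h. D2v (h *\<^sub>R i) \<bullet> i)) (at 0)"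
      using has_derivative_compose[OF dline, of Dv D2v] d2v by (auto intro!: derivative_eq_intros)
    moreover have "(\<lambda>h. D2v (h *\<^sub>R i) \<bullet> i) = (\<lambda>h. (D2v i \<bullet> i) * h)"
      using linear_scale[OF has_derivative_linear[OF d2v]] by auto
    ultimately show "((\<lambda>s. Dv (x + s *\<^sub>R i) \<bullet> i) has_real_derivative D2v i \<bullet> i) (at 0)"
      by (simp add: has_field_derivative_def)
  qed
qed

lemma heat_strict_subsolution_max_principle:
  fixes v vt :: "'a::euclidean_space \<Rightarrow> real \<Rightarrow> real"
    and Dv :: "'a \<Rightarrow> real \<Rightarrow> 'a" and D2v :: "'a \<Rightarrow> real \<Rightarrow> 'a \<Rightarrow> 'a"
  assumes "compact K" "open S" "S \<subseteq> K"
    and cont: "continuous_on (K \<times> {a..b}) (\<lambda>(x, t). v x t)"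
    and grad: "\<And>x t. x \<in> S \<Longrightarrow> t \<in> {a<..b} \<Longrightarrow>
                 ((\<lambda>y. v y t) has_derivative (\<lambda>h. Dv x t \<bullet> h)) (at x)"
    and hess: "\<And>x t. x \<in> S \<Longrightarrow> t \<in> {a<..b} \<Longrightarrow> ((\<lambda>y. Dv y t) has_derivative D2v x t) (at x)"
    and tder: "\<And>x t. x \<in> S \<Longrightarrow> t \<in> {a<..b} \<Longrightarrow> ((\<lambda>s. v x s) has_real_derivative vt x t) (at t)"
    and strict: "\<And>x t. x \<in> S \<Longrightarrow> t \<in> {a<..b} \<Longrightarrow> vt x t < (\<Sum>i\<in>Basis. D2v x t i \<bullet> i)"
    and lateral: "\<And>x t. x \<in> K - S \<Longrightarrow> t \<in> {a..b} \<Longrightarrow> v x t \<le> 0"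
    and initial: "\<And>x. x \<in> K \<Longrightarrow> v x a \<le> 0"
    and "x \<in> K" "t \<in> {a..b}"
  shows "v x t \<le> 0"
proof (rule ccontr)
  assume "\<not> v x t \<le> 0"
  have "compact (K \<times> {a..b})" using \<open>compact K\<close> by (intro compact_Times) auto
  then obtain y s where ys: "(y, s) \<in> K \<times> {a..b}"
    and max: "\<And>z \<tau>. (z, \<tau>) \<in> K \<times> {a..b} \<Longrightarrow> v z \<tau> \<le> v y s"
    using continuous_attains_sup[OF _ _ cont] \<open>x \<in> K\<close> \<open>t \<in> {a..b}\<close> by fastforce
  have "v y s > 0" using max[of x t] \<open>x \<in> K\<close> \<open>t \<in> {a..b}\<close> \<open>\<not> v x t \<le> 0\<close> by auto
  then have y: "y \<in> S" and s: "s \<in> {a<..b}"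
    using lateral[of y s] initial[of y] ys by (auto simp: less_le_not_le)
  have "vt y s \<ge> 0" \<comment> \<open>only the left difference quotients are usable, as \<open>s\<close> may be \<open>b\<close>\<close>
  proof (rule ccontr)
    assume "\<not> vt y s \<ge> 0"
    then obtain d where "d > 0" and dec: "\<And>h. h > 0 \<Longrightarrow> h < d \<Longrightarrow> v y s < v y (s - h)"
      using DERIV_neg_dec_left[OF tder[OF y s]] by auto
    define h where "h = min d (s - a) / 2"
    have "h > 0" "h < d" "s - h \<in> {a..b}" using \<open>d > 0\<close> s by (auto simp: h_def min_def field_simps)
    then show False using dec[of h] max[of y "s - h"] ys by auto
  qed
  moreover have "(\<Sum>i\<in>Basis. D2v y s i \<bullet> i) \<le> 0"
    using \<open>open S\<close> y max \<open>S \<subseteq> K\<close> ys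
    by (intro hessian_trace_nonpos_at_max[where v = "\<lambda>z. v z s", OF _ _ _ grad[OF _ s] hess[OF y s]])
      auto
  ultimately show False using strict[OF y s] by linarith
qed

lemma has_derivative_radial:
  fixes x :: "'a::real_inner"
  assumes "(F has_real_derivative F' (norm x ^ 2)) (at (norm x ^ 2))"
  shows "((\<lambda>y. F (norm y ^ 2)) has_derivative (\<lambda>h. (2 * F' (norm x ^ 2)) *\<^sub>R x \<bullet> h)) (at x)"
proof -
  have "((\<lambda>y. y \<bullet> y) has_derivative (\<lambda>h. h \<bullet> x + x \<bullet> h)) (at x)"
    by (auto intro!: derivative_eq_intros)
  moreover have "(F has_derivative (\<lambda>h. F' (x \<bullet> x) * h)) (at (x \<bullet> x))"
    using assms by (simp add: has_field_derivative_def power2_norm_eq_inner)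
  ultimately have "((\<lambda>y. F (y \<bullet> y)) has_derivative (\<lambda>h. F' (x \<bullet> x) * (h \<bullet> x + x \<bullet> h))) (at x)"
    using has_derivative_compose by blast
  then show ?thesis by (simp add: power2_norm_eq_inner inner_commute algebra_simps)
qed

lemma has_derivative_radial_gradient:
  fixes x :: "'a::real_inner"
  assumes "(F' has_real_derivative F'' (norm x ^ 2)) (at (norm x ^ 2))"
  shows "((\<lambda>y. (2 * F' (norm y ^ 2)) *\<^sub>R y) has_derivative
           (\<lambda>h. (2 * F' (norm x ^ 2)) *\<^sub>R h + (4 * F'' (norm x ^ 2) * (x \<bullet> h)) *\<^sub>R x)) (at x)"
  using has_derivative_radial[of F' F'' x, OF assms]
  by (auto intro!: derivative_eq_intros simp: algebra_simps)

lemma trace_radial_hessian: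
  fixes x :: "'a::euclidean_space"
  shows "(\<Sum>i\<in>Basis. ((2 * c) *\<^sub>R i + (4 * d * (x \<bullet> i)) *\<^sub>R x) \<bullet> i)
           = 2 * real DIM('a) * c + 4 * norm x ^ 2 * d"
proof -
  have "(\<Sum>i\<in>Basis. ((2 * c) *\<^sub>R i + (4 * d * (x \<bullet> i)) *\<^sub>R x) \<bullet> i)
          = (\<Sum>i\<in>(Basis::'a set). 2 * c) + 4 * d * (\<Sum>i\<in>Basis. (x \<bullet> i) * (x \<bullet> i))"
    by (simp add: sum.distrib sum_distrib_left algebra_simps)
  also have "(\<Sum>i\<in>Basis. (x \<bullet> i) * (x \<bullet> i)) = norm x ^ 2"
    by (simp add: power2_norm_eq_inner euclidean_inner[of x x])
  finally show ?thesis by simp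
qed

definition heat_barrier :: "real \<Rightarrow> real \<Rightarrow> real \<Rightarrow> real \<Rightarrow> 'a::euclidean_space \<Rightarrow> real \<Rightarrow> real" where
  "heat_barrier \<epsilon> \<eta> \<beta> c x t = \<epsilon> * norm x powr (2 - real DIM('a)) - \<eta> * norm x ^ 2 + \<beta> * t + c"

lemma heat_barrier_laplacian:
  obtains D\<Phi> :: "'a::euclidean_space \<Rightarrow> 'a" and D2\<Phi> :: "'a \<Rightarrow> 'a \<Rightarrow> 'a"
  where "\<And>y t. y \<noteq> 0 \<Longrightarrow>
           ((\<lambda>z. heat_barrier \<epsilon> \<eta> \<beta> c z t) has_derivative (\<lambda>h. D\<Phi> y \<bullet> h)) (at y)"
    and "\<And>y. y \<noteq> 0 \<Longrightarrow> (D\<Phi> has_derivative D2\<Phi> y) (at y)"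
    and "\<And>y. y \<noteq> 0 \<Longrightarrow> (\<Sum>i\<in>Basis. D2\<Phi> y i \<bullet> i) = - 2 * real DIM('a) * \<eta>"
proof
  define m where "m = real DIM('a)"
  define q where "q = (m - 2) / 2"
  define F where "F s = \<epsilon> * s powr (- q) - \<eta> * s" for s :: real
  define F' where "F' s = - \<epsilon> * q * s powr (- q - 1) - \<eta>" for s :: real
  define F'' where "F'' s = \<epsilon> * q * (q + 1) * s powr (- q - 2)" for s :: real
  have barrier: "heat_barrier \<epsilon> \<eta> \<beta> c y t = F (norm y ^ 2) + \<beta> * t + c" for y :: 'a and t
  proof -
    have "(norm y ^ 2) powr (- q) = (norm y powr 2) powr (- q)" by simp
    also have "\<dots> = norm y powr (2 * - q)" by (rule powr_powr)
    also have "2 * - q = 2 - m" by (simp add: q_def field_simps)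
    finally show ?thesis by (simp add: heat_barrier_def F_def m_def)
  qed
  have dF: "(F has_real_derivative F' s) (at s)" if "s > 0" for s
    using that unfolding F_def F'_def by (auto intro!: derivative_eq_intros simp: algebra_simps)
  have dF': "(F' has_real_derivative F'' s) (at s)" if "s > 0" for s
    using that unfolding F'_def F''_def by (auto intro!: derivative_eq_intros simp: algebra_simps)
  have laplacian: "2 * m * F' s + 4 * s * F'' s = - 2 * m * \<eta>" if "s > 0" for s
  proof -
    have pow: "s powr (- q - 1) = s * s powr (- q - 2)"
      using that by (simp add: powr_diff power2_eq_square field_simps)
    have "2 * m * F' s + 4 * s * F'' s = \<epsilon> * q * (4 * (q + 1) - 2 * m) * s powr (- q - 1) - 2 * m * \<eta>"
      unfolding F'_def F''_def pow by (simp add: algebra_simps)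
    also have "4 * (q + 1) - 2 * m = 0" by (simp add: q_def field_simps)
    finally show ?thesis by simp
  qed
  fix y :: 'a assume "y \<noteq> 0"
  then have s: "norm y ^ 2 > 0" by simp
  show "((\<lambda>z. heat_barrier \<epsilon> \<eta> \<beta> c z t) has_derivative
          (\<lambda>h. (2 * F' (norm y ^ 2)) *\<^sub>R y \<bullet> h)) (at y)" for t
    unfolding barrier using has_derivative_radial[of F F' y, OF dF[OF s]]
    by (auto intro!: derivative_eq_intros)
  show "((\<lambda>y. (2 * F' (norm y ^ 2)) *\<^sub>R y) has_derivative
          (\<lambda>h. (2 * F' (norm y ^ 2)) *\<^sub>R h + (4 * F'' (norm y ^ 2) * (y \<bullet> h)) *\<^sub>R y)) (at y)"
    using dF'[OF s] by (rule has_derivative_radial_gradient)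
  show "(\<Sum>i\<in>Basis. ((2 * F' (norm y ^ 2)) *\<^sub>R i + (4 * F'' (norm y ^ 2) * (y \<bullet> i)) *\<^sub>R y) \<bullet> i)
          = - 2 * real DIM('a) * \<eta>"
    using laplacian[OF s] by (simp add: trace_radial_hessian m_def)
qed

lemma heat_solution_le_barrier:
  fixes u :: "'a::euclidean_space \<Rightarrow> real \<Rightarrow> real"
  assumes sol: "punctured_heat_solution \<Lambda> u Du D2u ut"
    and "0 < r" "b < \<Lambda>" and strict: "\<beta> + 2 * real DIM('a) * \<eta> > 0"
    and lateral: "\<And>x t. norm x = r \<or> norm x = R \<Longrightarrow> t \<in> {a..b} \<Longrightarrow>
                    u x t \<le> heat_barrier \<epsilon> \<eta> \<beta> c x t"
    and initial: "\<And>x. r \<le> norm x \<Longrightarrow> norm x \<le> R \<Longrightarrow> u x a \<le> heat_barrier \<epsilon> \<eta> \<beta> c x a"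
    and "r \<le> norm x" "norm x \<le> R" "t \<in> {a..b}"
  shows "u x t \<le> heat_barrier \<epsilon> \<eta> \<beta> c x t"
proof -
  obtain D\<Phi> :: "'a \<Rightarrow> 'a" and D2\<Phi> :: "'a \<Rightarrow> 'a \<Rightarrow> 'a" where D\<Phi>: "\<And>y t. y \<noteq> 0 \<Longrightarrow>
           ((\<lambda>z. heat_barrier \<epsilon> \<eta> \<beta> c z t) has_derivative (\<lambda>h. D\<Phi> y \<bullet> h)) (at y)"
    and D2\<Phi>: "\<And>y. y \<noteq> 0 \<Longrightarrow> (D\<Phi> has_derivative D2\<Phi> y) (at y)"
    and laplacian: "\<And>y. y \<noteq> 0 \<Longrightarrow> (\<Sum>i\<in>Basis. D2\<Phi> y i \<bullet> i) = - 2 * real DIM('a) * \<eta>"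
    using heat_barrier_laplacian by blast
  define K where "K = cball (0::'a) R - ball 0 r"
  define S where "S = ball (0::'a) R - cball 0 r"
  have "compact K" "open S" "S \<subseteq> K" by (auto simp: K_def S_def compact_diff)
  have cyl: "y \<noteq> 0" "\<tau> < \<Lambda>" if "y \<in> K" "\<tau> \<in> {a..b}" for y \<tau>
    using that \<open>0 < r\<close> \<open>b < \<Lambda>\<close> by (auto simp: K_def)
  have "u x t - heat_barrier \<epsilon> \<eta> \<beta> c x t \<le> 0"
  proof (rule heat_strict_subsolution_max_principle[where v = "\<lambda>y \<tau>. u y \<tau> - heat_barrier \<epsilon> \<eta> \<beta> c y \<tau>"
        and Dv = "\<lambda>y \<tau>. Du y \<tau> - D\<Phi> y" and D2v = "\<lambda>y \<tau> h. D2u y \<tau> h - D2\<Phi> y h"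
        and vt = "\<lambda>y \<tau>. ut y \<tau> - \<beta>" and K = K and S = S])
    show "compact K" "open S" "S \<subseteq> K" by fact+
    show "x \<in> K" "t \<in> {a..b}"
      using \<open>r \<le> norm x\<close> \<open>norm x \<le> R\<close> \<open>t \<in> {a..b}\<close> by (auto simp: K_def)
    have "K \<times> {a..b} \<subseteq> (UNIV - {0}) \<times> {..<\<Lambda>}" using cyl by blast
    then have "continuous_on (K \<times> {a..b}) (\<lambda>p. u (fst p) (snd p))"
      using sol continuous_on_subset unfolding punctured_heat_solution_def case_prod_beta by blast
    moreover have "continuous_on (K \<times> {a..b}) (\<lambda>p. heat_barrier \<epsilon> \<eta> \<beta> c (fst p) (snd p))"
      unfolding heat_barrier_def using cyl by (intro continuous_intros) auto
    ultimately show "continuous_on (K \<times> {a..b}) (\<lambda>(y, \<tau>). u y \<tau> - heat_barrier \<epsilon> \<eta> \<beta> c y \<tau>)"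
      unfolding case_prod_beta by (rule continuous_on_diff)
  next
    fix y \<tau> assume "y \<in> S" "\<tau> \<in> {a<..b}"
    then have "y \<noteq> 0" "\<tau> < \<Lambda>" using cyl[of y \<tau>] \<open>S \<subseteq> K\<close> by auto
    then have grad: "((\<lambda>z. u z \<tau>) has_derivative (\<lambda>h. Du y \<tau> \<bullet> h)) (at y)"
      and hess: "((\<lambda>z. Du z \<tau>) has_derivative D2u y \<tau>) (at y)"
      and tder: "((\<lambda>s. u y s) has_real_derivative ut y \<tau>) (at \<tau>)"
      and heat: "ut y \<tau> = (\<Sum>i\<in>Basis. D2u y \<tau> i \<bullet> i)"
      using sol unfolding punctured_heat_solution_def by blast+
    show "((\<lambda>z. u z \<tau> - heat_barrier \<epsilon> \<eta> \<beta> c z \<tau>) has_derivative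
            (\<lambda>h. (Du y \<tau> - D\<Phi> y) \<bullet> h)) (at y)"
      using grad D\<Phi>[OF \<open>y \<noteq> 0\<close>] by (auto intro!: derivative_eq_intros simp: inner_diff_left)
    show "((\<lambda>z. Du z \<tau> - D\<Phi> z) has_derivative (\<lambda>h. D2u y \<tau> h - D2\<Phi> y h)) (at y)"
      using hess D2\<Phi>[OF \<open>y \<noteq> 0\<close>] by (auto intro!: derivative_eq_intros)
    show "((\<lambda>s. u y s - heat_barrier \<epsilon> \<eta> \<beta> c y s) has_real_derivative ut y \<tau> - \<beta>) (at \<tau>)"
      using tder unfolding heat_barrier_def by (auto intro!: derivative_eq_intros)
    show "ut y \<tau> - \<beta> < (\<Sum>i\<in>Basis. (D2u y \<tau> i - D2\<Phi> y i) \<bullet> i)"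
      using heat laplacian[OF \<open>y \<noteq> 0\<close>] strict by (simp add: inner_diff_left sum_subtractf)
  next
    fix y \<tau> assume "y \<in> K - S" "\<tau> \<in> {a..b}"
    then show "u y \<tau> - heat_barrier \<epsilon> \<eta> \<beta> c y \<tau> \<le> 0"
      using lateral by (auto simp: K_def S_def)
  next
    fix y assume "y \<in> K"
    then show "u y a - heat_barrier \<epsilon> \<eta> \<beta> c y a \<le> 0"
      using initial by (auto simp: K_def)
  qed
  then show ?thesis by simp
qed

lemma small_powr_bound:
  fixes \<alpha> C \<epsilon> \<rho> :: real
  assumes "\<alpha> > 0" "C > 0" "\<epsilon> > 0" "\<rho> > 0"
  obtains r where "0 < r" "r \<le> \<rho>" "C * r powr \<alpha> \<le> \<epsilon>"
proof
  define r where "r = min \<rho> ((\<epsilon> / C) powr (1 / \<alpha>))"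
  show "0 < r" "r \<le> \<rho>" using assms by (auto simp: r_def)
  have "C * r powr \<alpha> \<le> C * ((\<epsilon> / C) powr (1 / \<alpha>)) powr \<alpha>"
    using assms by (intro mult_left_mono powr_mono2) (auto simp: r_def)
  also have "\<dots> = \<epsilon>" using assms by (simp add: powr_powr)
  finally show "C * r powr \<alpha> \<le> \<epsilon>" .
qed

lemma large_powr_bound:
  fixes \<nu> C \<delta> \<rho> :: real
  assumes "\<nu> > 0" "C > 0" "\<delta> > 0" "\<rho> > 0"
  obtains R where "\<rho> \<le> R" "C * R powr (- \<nu>) \<le> \<delta>"
proof -
  obtain r where r: "0 < r" "r \<le> 1 / \<rho>" "C * r powr \<nu> \<le> \<delta>"
    using small_powr_bound[of \<nu> C \<delta> "1 / \<rho>"] assms by auto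
  have "(1 / r) powr (- \<nu>) = r powr \<nu>" using r by (simp add: powr_minus_divide powr_divide)
  then show thesis using that[of "1 / r"] r assms by (auto simp: field_simps)
qed

lemma heat_solution_le_decay_barrier:
  fixes u :: "'a::euclidean_space \<Rightarrow> real \<Rightarrow> real"
  defines "m \<equiv> real DIM('a)"
  assumes sol: "punctured_heat_solution \<Lambda> u Du D2u ut"
    and decay: "\<And>x t. x \<noteq> 0 \<Longrightarrow> t < \<Lambda> \<Longrightarrow> u x t \<le> C * norm x powr (- \<nu>)"
    and "C \<ge> 0" "\<nu> \<ge> 0" "0 < r" "\<eta> > 0" "\<epsilon> \<ge> 0" "a \<le> t" "t < \<Lambda>"
    and inner: "C * r powr (- \<nu>) \<le> \<epsilon> * r powr (2 - m)"
    and outer: "C * R powr (- \<nu>) \<le> \<delta>"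
    and bottom: "C * r powr (- \<nu>) \<le> m * \<eta> * (t - a)"
    and "r \<le> norm x" "norm x \<le> R"
  shows "u x t \<le> \<epsilon> * norm x powr (2 - m) + \<eta> * (R ^ 2 - norm x ^ 2) + \<delta>"
proof -
  define \<Phi> :: "'a \<Rightarrow> real \<Rightarrow> real"
    where "\<Phi> = heat_barrier \<epsilon> \<eta> (- m * \<eta>) (\<eta> * R ^ 2 + m * \<eta> * t + \<delta>)"
  have \<Phi>: "\<Phi> y \<tau> = \<epsilon> * norm y powr (2 - m) + \<eta> * (R ^ 2 - norm y ^ 2) + m * \<eta> * (t - \<tau>) + \<delta>"
    for y :: 'a and \<tau>
    by (simp add: \<Phi>_def heat_barrier_def m_def algebra_simps)
  have "m > 0" by (simp add: m_def)
  have "\<delta> \<ge> 0" using outer \<open>C \<ge> 0\<close> by (smt (verit) mult_nonneg_nonneg powr_ge_zero)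
  have \<Phi>_lower: "\<epsilon> * norm y powr (2 - m) + m * \<eta> * (t - \<tau>) + \<delta> \<le> \<Phi> y \<tau>"
    if "norm y \<le> R" for y :: 'a and \<tau>
    using that \<open>\<eta> > 0\<close> by (simp add: \<Phi> power_mono)
  have potential_nonneg: "\<epsilon> * norm y powr (2 - m) \<ge> 0" for y :: 'a
    using \<open>\<epsilon> \<ge> 0\<close> by simp
  have drift_nonneg: "m * \<eta> * (t - \<tau>) \<ge> 0" if "\<tau> \<le> t" for \<tau>
    using that \<open>\<eta> > 0\<close> \<open>m > 0\<close> by simp
  have decay_annulus: "u y \<tau> \<le> C * r powr (- \<nu>)" if "r \<le> norm y" "\<tau> \<le> t" for y :: 'a and \<tau>
  proof -
    have "y \<noteq> 0" using that \<open>0 < r\<close> by auto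
    then have "u y \<tau> \<le> C * norm y powr (- \<nu>)" using decay that \<open>t < \<Lambda>\<close> by simp
    also have "\<dots> \<le> C * r powr (- \<nu>)"
      using that \<open>0 < r\<close> \<open>C \<ge> 0\<close> \<open>\<nu> \<ge> 0\<close> by (intro mult_left_mono powr_mono2') auto
    finally show ?thesis .
  qed
  have "u x t \<le> \<Phi> x t"
    unfolding \<Phi>_def
  proof (rule heat_solution_le_barrier[OF sol \<open>0 < r\<close> \<open>t < \<Lambda>\<close>])
    show "- m * \<eta> + 2 * real DIM('a) * \<eta> > 0" using \<open>\<eta> > 0\<close> \<open>m > 0\<close> by (simp add: m_def)
  next
    fix y :: 'a and \<tau> assume y: "norm y = r \<or> norm y = R" and \<tau>: "\<tau> \<in> {a..t}"
    then have "y \<noteq> 0" "norm y \<le> R" using \<open>0 < r\<close> \<open>r \<le> norm x\<close> \<open>norm x \<le> R\<close> by auto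
    have "u y \<tau> \<le> \<epsilon> * norm y powr (2 - m) + \<delta>"
      using y decay[OF \<open>y \<noteq> 0\<close>, of \<tau>] \<tau> \<open>t < \<Lambda>\<close> inner outer \<open>\<delta> \<ge> 0\<close> potential_nonneg[of y]
      by auto
    then show "u y \<tau> \<le> heat_barrier \<epsilon> \<eta> (- m * \<eta>) (\<eta> * R ^ 2 + m * \<eta> * t + \<delta>) y \<tau>"
      using \<Phi>_lower[OF \<open>norm y \<le> R\<close>, of \<tau>] drift_nonneg[of \<tau>] \<tau> by (auto simp: \<Phi>_def)
  next
    fix y :: 'a assume "r \<le> norm y" "norm y \<le> R"
    then show "u y a \<le> heat_barrier \<epsilon> \<eta> (- m * \<eta>) (\<eta> * R ^ 2 + m * \<eta> * t + \<delta>) y a"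
      using decay_annulus[of y a] bottom \<Phi>_lower[of y a] potential_nonneg[of y] \<open>\<delta> \<ge> 0\<close> \<open>a \<le> t\<close>
      by (auto simp: \<Phi>_def)
  qed (use assms in auto)
  then show ?thesis by (simp add: \<Phi>)
qed

lemma heat_solution_nonpos_of_decay:
  fixes u :: "'a::euclidean_space \<Rightarrow> real \<Rightarrow> real"
  assumes sol: "punctured_heat_solution \<Lambda> u Du D2u ut"
    and "C > 0" "0 < \<nu>" "\<nu> < real DIM('a) - 2"
    and decay: "\<And>x t. x \<noteq> 0 \<Longrightarrow> t < \<Lambda> \<Longrightarrow> u x t \<le> C * norm x powr (- \<nu>)"
    and "x \<noteq> 0" "t < \<Lambda>"
  shows "u x t \<le> 0"
proof (rule field_le_epsilon)
  fix e :: real assume "e > 0"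
  define m where "m = real DIM('a)"
  define \<epsilon> where "\<epsilon> = e / (3 * norm x powr (2 - m))"
  have "\<epsilon> > 0" "m > 0" using \<open>e > 0\<close> \<open>x \<noteq> 0\<close> by (auto simp: \<epsilon>_def m_def)
  obtain r where r: "0 < r" "r \<le> norm x" "C * r powr (m - 2 - \<nu>) \<le> \<epsilon>"
    using small_powr_bound[of "m - 2 - \<nu>" C \<epsilon> "norm x"] assms \<open>\<epsilon> > 0\<close> by (auto simp: m_def)
  obtain R where R: "norm x \<le> R" "C * R powr (- \<nu>) \<le> e / 3"
    using large_powr_bound[of \<nu> C "e / 3" "norm x"] assms \<open>e > 0\<close> by auto
  have "R > 0" using R(1) \<open>x \<noteq> 0\<close> by (meson less_le_trans zero_less_norm_iff)
  define \<eta> where "\<eta> = e / (6 * R ^ 2)"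
  define a where "a = t - C * r powr (- \<nu>) / (m * \<eta>)"
  have "\<eta> > 0" "a \<le> t" using \<open>e > 0\<close> \<open>m > 0\<close> \<open>C > 0\<close> r R by (auto simp: \<eta>_def a_def)
  have "C * r powr (- \<nu>) = C * r powr (m - 2 - \<nu>) * r powr (2 - m)"
    using r by (simp add: mult.assoc powr_add[symmetric])
  also have "\<dots> \<le> \<epsilon> * r powr (2 - m)" using r by (intro mult_right_mono) auto
  finally have inner: "C * r powr (- \<nu>) \<le> \<epsilon> * r powr (2 - m)" .
  have "u x t \<le> \<epsilon> * norm x powr (2 - m) + \<eta> * (R ^ 2 - norm x ^ 2) + e / 3"
    using heat_solution_le_decay_barrier[OF sol decay, of r \<eta> \<epsilon> a t R "e / 3" x] inner R r
      \<open>\<eta> > 0\<close> \<open>\<epsilon> > 0\<close> \<open>a \<le> t\<close> assms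
    by (simp add: m_def a_def)
  also have "\<dots> \<le> e / 3 + \<eta> * R ^ 2 + e / 3"
    using \<open>\<eta> > 0\<close> \<open>x \<noteq> 0\<close> by (simp add: \<epsilon>_def)
  also have "\<eta> * R ^ 2 = e / 6" using \<open>R > 0\<close> by (simp add: \<eta>_def)
  also have "e / 3 + e / 6 + e / 3 \<le> 0 + e" using \<open>e > 0\<close> by simp
  finally show "u x t \<le> 0 + e" .
qed

theorem proposition6p4:
  fixes u :: "'a::euclidean_space \<Rightarrow> real \<Rightarrow> real"
    and Du :: "'a \<Rightarrow> real \<Rightarrow> 'a"
    and D2u :: "'a \<Rightarrow> real \<Rightarrow> 'a \<Rightarrow> 'a"
    and ut :: "'a \<Rightarrow> real \<Rightarrow> real"
    and \<Lambda> C \<nu> :: real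
  assumes dim: "DIM('a) \<ge> 3"
    and grad: "\<And>x t. x \<noteq> 0 \<Longrightarrow> t < \<Lambda> \<Longrightarrow>
                 ((\<lambda>y. u y t) has_derivative (\<lambda>h. Du x t \<bullet> h)) (at x)"
    and hess: "\<And>x t. x \<noteq> 0 \<Longrightarrow> t < \<Lambda> \<Longrightarrow>
                 ((\<lambda>y. Du y t) has_derivative D2u x t) (at x)"
    and tder: "\<And>x t. x \<noteq> 0 \<Longrightarrow> t < \<Lambda> \<Longrightarrow>
                 ((\<lambda>s. u x s) has_real_derivative ut x t) (at t)"
    and cont_u: "continuous_on ((UNIV - {0}) \<times> {..<\<Lambda>}) (\<lambda>(x, t). u x t)"
    and cont_Du: "continuous_on ((UNIV - {0}) \<times> {..<\<Lambda>}) (\<lambda>(x, t). Du x t)"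
    and cont_D2u: "\<And>b. b \<in> Basis \<Longrightarrow>
                 continuous_on ((UNIV - {0}) \<times> {..<\<Lambda>}) (\<lambda>(x, t). D2u x t b)"
    and cont_ut: "continuous_on ((UNIV - {0}) \<times> {..<\<Lambda>}) (\<lambda>(x, t). ut x t)"
    and heat: "\<And>x t. x \<noteq> 0 \<Longrightarrow> t < \<Lambda> \<Longrightarrow>
                 ut x t = (\<Sum>b\<in>Basis. D2u x t b \<bullet> b)"
    and C_pos: "C > 0"
    and nu_pos: "0 < \<nu>" and nu_lt: "\<nu> < real DIM('a) - 2"
    and bound0: "\<And>x t. x \<noteq> 0 \<Longrightarrow> t < \<Lambda> \<Longrightarrow> \<bar>u x t\<bar> \<le> C * norm x powr (- \<nu>)"
    and bound1: "\<And>x t. x \<noteq> 0 \<Longrightarrow> t < \<Lambda> \<Longrightarrow> norm (Du x t) \<le> C * norm x powr (- \<nu> - 1)"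
    and bound2: "\<And>x t. x \<noteq> 0 \<Longrightarrow> t < \<Lambda> \<Longrightarrow>
                 sqrt (\<Sum>b\<in>Basis. (norm (D2u x t b))\<^sup>2) \<le> C * norm x powr (- \<nu> - 2)"
  shows "\<forall>x t. x \<noteq> 0 \<and> t < \<Lambda> \<longrightarrow> u x t = 0"
proof (intro allI impI)
  fix x :: 'a and t assume "x \<noteq> 0 \<and> t < \<Lambda>"
  have sol: "punctured_heat_solution \<Lambda> u Du D2u ut"
    unfolding punctured_heat_solution_def using cont_u grad hess tder heat by blast
  have "u x t \<le> 0"
    using heat_solution_nonpos_of_decay[OF sol C_pos nu_pos nu_lt] bound0 \<open>x \<noteq> 0 \<and> t < \<Lambda>\<close>
    by (meson abs_le_D1)
  moreover have "- u x t \<le> 0"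
    using heat_solution_nonpos_of_decay[OF punctured_heat_solution_uminus[OF sol] C_pos nu_pos nu_lt]
      bound0 \<open>x \<noteq> 0 \<and> t < \<Lambda>\<close>
    by (meson abs_le_D2)
  ultimately show "u x t = 0" by simp
qed

end
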